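(* Let $u\ge1$ be an integer, $H$ a graph with $\mathrm{dom}(H)\ge u$, and $\Delta\ge\omega\ge\omega_0(H^{\downarrow u})+u$. Let $G$ be a $\{K_u\vee I_{\Delta+1},K_{\omega+1}\}$-free graph such that every $u$-clique $c$ of $G$ with $c\subseteq\mathrm{Dom}(J)$ for some $J\in\mathcal{H}(G)$ satisfies $\omega(c)\ge\omega_0(H^{\downarrow u})+u$. Then \[\mathcal{N}(H,G)\le\frac{\mathcal{N}(H^{\downarrow u},\mathrm{T}_{\omega-u}(\Delta))\,k^u(G)}{\binom{\mathrm{dom}(H)}{u}}.\]
   Context: All graphs are finite and simple. $\mathcal{N}(H,G)$ is the number of (not necessarily induced) subgraphs of $G$ isomorphic to $H$, $\mathcal{H}(G)$ is the set of such subgraphs, and $k^u(G)$ is the number of $u$-cliques of $G$ (cliques identified with vertex sets). A graph is $\mathcal{F}$-free if it has no subgraph isomorphic to a member of $\mathcal{F}$. $K_u\vee I_{\Delta+1}$ is the complete split graph: a $u$-clique, an independent set of $\Delta+1$ vertices, and all edges between them. $\mathrm{T}_r(n)$ is the Turán graph (complete $r$-partite on $n$ vertices with part sizes $\lfloor n/r\rfloor$ or $\lceil n/r\rceil$). A dominating vertex of a graph $J$ is a vertex adjacent in $J$ to all other vertices of $J$; $\mathrm{Dom}(J)$ is their set and $\mathrm{dom}(J)=|\mathrm{Dom}(J)|$. $H^{\downarrow u}$ is $H$ with $u$ dominating vertices deleted. For a $u$-clique $c$ of $G$, $\omega(c)$ is the maximum size of a clique of $G$ containing $c$. For a graph $F$,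 $\omega_0(F)$ is the least positive integer such that for every integer $r\ge\omega_0(F)$ and every $n\ge1$, every $n$-vertex $K_{r+1}$-free graph $G'$ satisfies $\mathcal{N}(F,G')\le\mathcal{N}(F,\mathrm{T}_r(n))$ (it exists by a theorem of Morrison et al.). *)

theory Defs
  imports Complex_Main
begin

type_synonym 'a graph = "'a set \<times> 'a set set"

definition verts :: "'a graph \<Rightarrow> 'a set" where "verts G = fst G"
definition edges :: "'a graph \<Rightarrow> 'a set set" where "edges G = snd G"

definition wf_graph :: "'a graph \<Rightarrow> bool" where
  "wf_graph G \<longleftrightarrow> finite (verts G) \<and> (\<forall>e\<in>edges G. e \<subseteq> verts G \<and> card e = 2)"

definition subgraph :: "'a graph \<Rightarrow> 'a graph \<Rightarrow> bool" where
  "subgraph J G \<longleftrightarrow> wf_graph J \<and> verts J \<subseteq> verts G \<and> edges J \<subseteq> edges G"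

definition graph_iso :: "'a graph \<Rightarrow> 'b graph \<Rightarrow> bool" where
  "graph_iso G H \<longleftrightarrow> (\<exists>f. bij_betw f (verts G) (verts H) \<and>
      (\<forall>x\<in>verts G. \<forall>y\<in>verts G. {x, y} \<in> edges G \<longleftrightarrow> {f x, f y} \<in> edges H))"

definition copies :: "'b graph \<Rightarrow> 'a graph \<Rightarrow> 'a graph set" where
  "copies H G = {J. subgraph J G \<and> graph_iso J H}"

definition num_copies :: "'b graph \<Rightarrow> 'a graph \<Rightarrow> nat" where
  "num_copies H G = card (copies H G)"

definition free :: "'b graph set \<Rightarrow> 'a graph \<Rightarrow> bool" where
  "free Fs G \<longleftrightarrow> (\<forall>F\<in>Fs. copies F G = {})"

definition is_clique :: "'a graph \<Rightarrow> 'a set \<Rightarrow> bool" where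
  "is_clique G c \<longleftrightarrow> c \<subseteq> verts G \<and> (\<forall>x\<in>c. \<forall>y\<in>c. x \<noteq> y \<longrightarrow> {x, y} \<in> edges G)"

definition num_cliques :: "nat \<Rightarrow> 'a graph \<Rightarrow> nat" where
  "num_cliques u G = card {c. is_clique G c \<and> card c = u}"

definition clique_omega :: "'a graph \<Rightarrow> 'a set \<Rightarrow> nat" where
  "clique_omega G c = Max {card c' | c'. is_clique G c' \<and> c \<subseteq> c'}"

definition Dom :: "'a graph \<Rightarrow> 'a set" where
  "Dom J = {v \<in> verts J. \<forall>w\<in>verts J. w \<noteq> v \<longrightarrow> {v, w} \<in> edges J}"

definition dom_num :: "'a graph \<Rightarrow> nat" where
  "dom_num J = card (Dom J)"

definition induced :: "'a graph \<Rightarrow> 'a set \<Rightarrow> 'a graph" where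
  "induced G S = (S, {e \<in> edges G. e \<subseteq> S})"

text \<open>\<open>H^{\<down>u}\<close>: H with (some choice of) u dominating vertices deleted.
  (The result does not depend on the choice, up to isomorphism.)\<close>
definition del_dom :: "'a graph \<Rightarrow> nat \<Rightarrow> 'a graph" where
  "del_dom H u = (let D = (SOME D. D \<subseteq> Dom H \<and> card D = u) in induced H (verts H - D))"

definition complete_graph :: "nat \<Rightarrow> nat graph" where
  "complete_graph n = ({0..<n}, {{i, j} | i j. i < n \<and> j < n \<and> i \<noteq> j})"

definition complete_split :: "nat \<Rightarrow> nat \<Rightarrow> nat graph" where
  "complete_split u m = ({0..<u + m},
     {{i, j} | i j. i < u + m \<and> j < u + m \<and> i \<noteq> j \<and> (i < u \<or> j < u)})"

definition turan :: "nat \<Rightarrow> nat \<Rightarrow> nat graph" where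
  "turan r n = ({0..<n}, {{i, j} | i j. i < n \<and> j < n \<and> i mod r \<noteq> j mod r})"

text \<open>The property defining \<open>\<omega>_0(F)\<close> at threshold r0 (graphs on n vertices are
  represented on vertex type nat, which is no loss since \<open>\<N>\<close> is isomorphism-invariant).\<close>
definition omega0_prop :: "'b graph \<Rightarrow> nat \<Rightarrow> bool" where
  "omega0_prop F r0 \<longleftrightarrow> 0 < r0 \<and>
     (\<forall>r \<ge> r0. \<forall>n \<ge> 1. \<forall>G' :: nat graph.
        wf_graph G' \<and> card (verts G') = n \<and> free {complete_graph (r + 1)} G'
        \<longrightarrow> num_copies F G' \<le> num_copies F (turan r n))"

definition omega0 :: "'b graph \<Rightarrow> nat" where
  "omega0 F = (LEAST r0. omega0_prop F r0)"

end

theory Submission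
  imports Defs
begin

text \<open>Double count the pairs \<open>(J, c)\<close> where \<open>J\<close> is a copy of \<open>H\<close> in \<open>G\<close> and \<open>c\<close> is a
  \<open>u\<close>-clique of dominating vertices of \<open>J\<close>. Every copy contains \<open>dom(H) choose u\<close> such
  cliques. Conversely, fix a \<open>u\<close>-clique \<open>c\<close>: deleting \<open>c\<close> from such a \<open>J\<close> leaves a copy
  of \<open>del_dom H u\<close> inside the common neighbourhood \<open>N(c)\<close> of \<open>c\<close>, and \<open>J\<close> can be recovered
  from it. \<open>N(c)\<close> has at most \<open>\<Delta>\<close> vertices, since otherwise \<open>G\<close> would contain
  \<open>K_u \<or> I_(\<Delta>+1)\<close>, and it is \<open>K_(\<omega>-u+1)\<close>-free, since such a clique together with \<open>c\<close>
  would form a \<open>K_(\<omega>+1)\<close>. As \<open>\<omega> - u \<ge> \<omega>\<^sub>0(del_dom H u)\<close>, the defining property of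
  \<open>\<omega>\<^sub>0\<close> bounds the number of these copies by that in the Turan graph \<open>T_(\<omega>-u)(\<Delta>)\<close>.\<close>

section \<open>Isomorphisms, embeddings and copies\<close>

lemma verts_induced [simp]: "verts (induced G S) = S"
  by (simp add: induced_def verts_def)

lemma edges_induced [simp]: "edges (induced G S) = {e \<in> edges G. e \<subseteq> S}"
  by (simp add: induced_def edges_def)

lemma graph_eqI: "verts J1 = verts J2 \<Longrightarrow> edges J1 = edges J2 \<Longrightarrow> J1 = J2"
  by (simp add: verts_def edges_def prod_eq_iff)

lemma wf_graph_edgeE:
  assumes "wf_graph G" "e \<in> edges G"
  obtains x y where "x \<in> verts G" "y \<in> verts G" "x \<noteq> y" "e = {x, y}"
proof -
  have "e \<subseteq> verts G" "card e = 2" using assms unfolding wf_graph_def by auto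
  then show ?thesis using that by (auto simp: card_2_iff)
qed

lemma wf_graph_no_loop: "wf_graph G \<Longrightarrow> {x} \<notin> edges G"
  unfolding wf_graph_def by fastforce

lemma wf_graph_induced: "wf_graph G \<Longrightarrow> S \<subseteq> verts G \<Longrightarrow> wf_graph (induced G S)"
  unfolding wf_graph_def by (auto intro: finite_subset)

lemma finite_edges: "wf_graph G \<Longrightarrow> finite (edges G)"
  unfolding wf_graph_def by (meson PowI finite_Pow_iff finite_subset subsetI)

lemma graph_iso_refl: "graph_iso G G"
  unfolding graph_iso_def by (rule exI[of _ id]) simp

lemma graph_iso_trans:
  assumes "graph_iso A B" "graph_iso B C" shows "graph_iso A C"
proof -
  obtain f where f: "bij_betw f (verts A) (verts B)"
    "\<forall>x\<in>verts A. \<forall>y\<in>verts A. {x, y} \<in> edges A \<longleftrightarrow> {f x, f y} \<in> edges B"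
    using assms(1) unfolding graph_iso_def by blast
  obtain g where g: "bij_betw g (verts B) (verts C)"
    "\<forall>x\<in>verts B. \<forall>y\<in>verts B. {x, y} \<in> edges B \<longleftrightarrow> {g x, g y} \<in> edges C"
    using assms(2) unfolding graph_iso_def by blast
  have "\<forall>x\<in>verts A. \<forall>y\<in>verts A. {x, y} \<in> edges A \<longleftrightarrow> {g (f x), g (f y)} \<in> edges C"
    using f(2) g(2) bij_betwE[OF f(1)] by simp
  then show ?thesis
    using bij_betw_trans[OF f(1) g(1)] unfolding graph_iso_def comp_def by blast
qed

lemma graph_iso_sym:
  assumes "graph_iso A B" shows "graph_iso B A"
proof -
  obtain f where f: "bij_betw f (verts A) (verts B)"
    "\<forall>x\<in>verts A. \<forall>y\<in>verts A. {x, y} \<in> edges A \<longleftrightarrow> {f x, f y} \<in> edges B"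
    using assms unfolding graph_iso_def by blast
  define g where "g = inv_into (verts A) f"
  have g: "bij_betw g (verts B) (verts A)" using f(1) bij_betw_inv_into g_def by blast
  have g_inv: "g x \<in> verts A" "f (g x) = x" if "x \<in> verts B" for x
    using that f(1) unfolding g_def by (auto simp: bij_betw_def f_inv_into_f inv_into_into)
  have "{x, y} \<in> edges B \<longleftrightarrow> {g x, g y} \<in> edges A" if "x \<in> verts B" "y \<in> verts B" for x y
    using f(2)[rule_format, OF g_inv(1)[OF that(1)] g_inv(1)[OF that(2)]] g_inv(2) that by simp
  then show ?thesis using g unfolding graph_iso_def by blast
qed

lemma graph_iso_induced:
  assumes "bij_betw f (verts J) (verts H)"
    and "\<forall>x\<in>verts J. \<forall>y\<in>verts J. {x, y} \<in> edges J \<longleftrightarrow> {f x, f y} \<in> edges H"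
    and "S \<subseteq> verts J"
  shows "graph_iso (induced J S) (induced H (f ` S))"
  unfolding graph_iso_def
proof (intro exI conjI)
  show "bij_betw f (verts (induced J S)) (verts (induced H (f ` S)))"
    using assms(1,3) by (auto simp: bij_betw_def intro: inj_on_subset)
  show "\<forall>x\<in>verts (induced J S). \<forall>y\<in>verts (induced J S).
     {x, y} \<in> edges (induced J S) \<longleftrightarrow> {f x, f y} \<in> edges (induced H (f ` S))"
    using assms(2,3) by auto
qed

definition graph_embedding :: "('a \<Rightarrow> 'c) \<Rightarrow> 'a graph \<Rightarrow> 'c graph \<Rightarrow> bool" where
  "graph_embedding \<phi> G1 G2 \<longleftrightarrow> inj_on \<phi> (verts G1) \<and> \<phi> ` verts G1 \<subseteq> verts G2 \<and>
     (\<forall>x\<in>verts G1. \<forall>y\<in>verts G1. {x, y} \<in> edges G1 \<longrightarrow> {\<phi> x, \<phi> y} \<in> edges G2)"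

lemma graph_iso_imp_embedding:
  assumes "graph_iso G1 G2" obtains \<phi> where "graph_embedding \<phi> G1 G2"
proof -
  obtain f where "bij_betw f (verts G1) (verts G2)"
    "\<forall>x\<in>verts G1. \<forall>y\<in>verts G1. {x, y} \<in> edges G1 \<longleftrightarrow> {f x, f y} \<in> edges G2"
    using assms unfolding graph_iso_def by blast
  then have "graph_embedding f G1 G2" unfolding graph_embedding_def bij_betw_def by simp
  then show ?thesis by (rule that)
qed

definition graph_image :: "('a \<Rightarrow> 'c) \<Rightarrow> 'a graph \<Rightarrow> 'c graph" where
  "graph_image \<phi> J = (\<phi> ` verts J, (\<lambda>e. \<phi> ` e) ` edges J)"

lemma verts_graph_image [simp]: "verts (graph_image \<phi> J) = \<phi> ` verts J"
  by (simp add: graph_image_def verts_def)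

lemma edges_graph_image [simp]: "edges (graph_image \<phi> J) = (\<lambda>e. \<phi> ` e) ` edges J"
  by (simp add: graph_image_def edges_def)

lemma
  assumes "wf_graph J" "inj_on \<phi> (verts J)"
  shows graph_iso_graph_image: "graph_iso J (graph_image \<phi> J)"
    and wf_graph_graph_image: "wf_graph (graph_image \<phi> J)"
proof -
  have "{x, y} \<in> edges J \<longleftrightarrow> {\<phi> x, \<phi> y} \<in> edges (graph_image \<phi> J)"
    if xy: "x \<in> verts J" "y \<in> verts J" for x y
  proof
    assume "{\<phi> x, \<phi> y} \<in> edges (graph_image \<phi> J)"
    then obtain e where e: "e \<in> edges J" "\<phi> ` e = \<phi> ` {x, y}" by auto
    have "e \<subseteq> verts J" using assms(1) e(1) unfolding wf_graph_def by blast
    then have "e = {x, y}" using inj_on_image_eq_iff[OF assms(2), of e "{x, y}"] e(2) xy by simp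
    then show "{x, y} \<in> edges J" using e(1) by simp
  qed (auto intro: image_eqI[where x="{x, y}"])
  then show "graph_iso J (graph_image \<phi> J)"
    using assms(2) unfolding graph_iso_def bij_betw_def by auto
  have "\<phi> ` e \<subseteq> \<phi> ` verts J \<and> card (\<phi> ` e) = 2" if e: "e \<in> edges J" for e
  proof -
    obtain x y where "x \<in> verts J" "y \<in> verts J" "x \<noteq> y" "e = {x, y}"
      using wf_graph_edgeE[OF assms(1) e] .
    moreover have "\<phi> x \<noteq> \<phi> y" using calculation assms(2) by (meson inj_onD)
    ultimately show ?thesis by auto
  qed
  then show "wf_graph (graph_image \<phi> J)"
    using assms(1) unfolding wf_graph_def by auto
qed

lemma finite_copies: "wf_graph G \<Longrightarrow> finite (copies F G)"
proof (rule finite_subset)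
  show "copies F G \<subseteq> Pow (verts G) \<times> Pow (edges G)"
    by (auto simp: copies_def subgraph_def verts_def edges_def)
qed (simp add: finite_edges wf_graph_def)

lemma copies_self: "wf_graph F \<Longrightarrow> F \<in> copies F F"
  by (simp add: copies_def subgraph_def graph_iso_refl)

lemma graph_image_in_copies:
  assumes J: "J \<in> copies F G1" and \<phi>: "graph_embedding \<phi> G1 G2"
  shows "graph_image \<phi> J \<in> copies F G2"
proof -
  have sJ: "wf_graph J" "verts J \<subseteq> verts G1" "edges J \<subseteq> edges G1" "graph_iso J F"
    using J unfolding copies_def subgraph_def by auto
  have inj: "inj_on \<phi> (verts J)"
    using \<phi> sJ(2) unfolding graph_embedding_def by (blast intro: inj_on_subset)
  have "\<phi> ` e \<in> edges G2" if e: "e \<in> edges J" for e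
  proof -
    obtain x y where "x \<in> verts J" "y \<in> verts J" "e = {x, y}"
      using wf_graph_edgeE[OF sJ(1) e] by metis
    then show ?thesis using \<phi> sJ(2,3) e unfolding graph_embedding_def by (simp add: subset_iff)
  qed
  then have "subgraph (graph_image \<phi> J) G2"
    using wf_graph_graph_image[OF sJ(1) inj] \<phi> sJ(2)
    unfolding subgraph_def graph_embedding_def by auto
  moreover have "graph_iso (graph_image \<phi> J) F"
    using graph_iso_trans[OF graph_iso_sym[OF graph_iso_graph_image[OF sJ(1) inj]] sJ(4)] .
  ultimately show ?thesis unfolding copies_def by simp
qed

lemma inj_on_graph_image_copies:
  assumes inj: "inj_on \<phi> (verts G)"
  shows "inj_on (graph_image \<phi>) (copies F G)"
proof
  fix J1 J2 assume J: "J1 \<in> copies F G" "J2 \<in> copies F G"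
    and eq: "graph_image \<phi> J1 = graph_image \<phi> J2"
  have s: "verts J1 \<subseteq> verts G" "verts J2 \<subseteq> verts G"
    "edges J1 \<subseteq> Pow (verts G)" "edges J2 \<subseteq> Pow (verts G)"
    using J unfolding copies_def subgraph_def wf_graph_def by blast+
  have "inj_on ((`) \<phi>) (Pow (verts G))"
    by (rule inj_onI) (simp add: inj_on_image_eq_iff[OF inj])
  then show "J1 = J2"
    using arg_cong[OF eq, of verts] arg_cong[OF eq, of edges] s
    by (auto intro!: graph_eqI simp: inj_on_image_eq_iff[OF inj] inj_on_image_eq_iff)
qed

lemma card_copies_le_embedding:
  assumes "wf_graph G2" "graph_embedding \<phi> G1 G2"
  shows "card (copies F G1) \<le> card (copies F G2)"
proof (rule card_inj_on_le[OF _ _ finite_copies[OF assms(1)]])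
  show "inj_on (graph_image \<phi>) (copies F G1)"
    using assms(2) unfolding graph_embedding_def by (blast intro: inj_on_graph_image_copies)
  show "graph_image \<phi> ` copies F G1 \<subseteq> copies F G2"
    using graph_image_in_copies[OF _ assms(2)] by blast
qed

lemma copies_nonempty_embedding:
  "graph_embedding \<phi> G1 G2 \<Longrightarrow> copies F G1 \<noteq> {} \<Longrightarrow> copies F G2 \<noteq> {}"
  using graph_image_in_copies by blast

lemma copies_nonempty_if_embeds:
  "wf_graph F \<Longrightarrow> graph_embedding \<phi> F G \<Longrightarrow> copies F G \<noteq> {}"
  using copies_nonempty_embedding copies_self by blast

section \<open>Dominating vertices\<close>

lemma Dom_subset_verts: "Dom J \<subseteq> verts J"
  by (auto simp: Dom_def)

lemma finite_Dom: "wf_graph J \<Longrightarrow> finite (Dom J)"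
  unfolding wf_graph_def using finite_subset[OF Dom_subset_verts] by blast

lemma edge_if_Dom:
  "x \<in> Dom J \<or> y \<in> Dom J \<Longrightarrow> x \<in> verts J \<Longrightarrow> y \<in> verts J \<Longrightarrow> x \<noteq> y \<Longrightarrow> {x, y} \<in> edges J"
  by (cases "x \<in> Dom J") (auto simp: Dom_def insert_commute)

lemma Dom_iso_iff:
  assumes f: "bij_betw f (verts J) (verts H)"
    and e: "\<forall>x\<in>verts J. \<forall>y\<in>verts J. {x, y} \<in> edges J \<longleftrightarrow> {f x, f y} \<in> edges H"
    and x: "x \<in> verts J"
  shows "f x \<in> Dom H \<longleftrightarrow> x \<in> Dom J"
proof
  assume d: "f x \<in> Dom H"
  have "{x, w} \<in> edges J" if w: "w \<in> verts J" "w \<noteq> x" for w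
  proof -
    have "f w \<noteq> f x" "f w \<in> verts H" using f w x by (auto simp: bij_betw_def inj_on_def)
    then have "{f x, f w} \<in> edges H" using d by (auto simp: Dom_def)
    then show ?thesis using e x w by auto
  qed
  then show "x \<in> Dom J" using x by (auto simp: Dom_def)
next
  assume d: "x \<in> Dom J"
  have "{f x, w} \<in> edges H" if w: "w \<in> verts H" "w \<noteq> f x" for w
  proof -
    obtain w0 where w0: "w0 \<in> verts J" "w = f w0" using w f by (auto simp: bij_betw_def)
    then have "w0 \<noteq> x" using w by auto
    then have "{x, w0} \<in> edges J" using d w0 by (auto simp: Dom_def)
    then show ?thesis using e x w0 by auto
  qed
  moreover have "f x \<in> verts H" using f x by (auto simp: bij_betw_def)
  ultimately show "f x \<in> Dom H" by (auto simp: Dom_def)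
qed

lemma image_Dom_iso:
  assumes f: "bij_betw f (verts J) (verts H)"
    and e: "\<forall>x\<in>verts J. \<forall>y\<in>verts J. {x, y} \<in> edges J \<longleftrightarrow> {f x, f y} \<in> edges H"
  shows "f ` Dom J = Dom H"
proof -
  have "f ` Dom J = {y \<in> f ` verts J. y \<in> Dom H}"
    using Dom_iso_iff[OF f e] Dom_subset_verts[of J] by auto
  also have "\<dots> = Dom H" using f Dom_subset_verts[of H] unfolding bij_betw_def by auto
  finally show ?thesis .
qed

lemma dom_num_iso: "graph_iso J H \<Longrightarrow> dom_num J = dom_num H"
proof -
  assume "graph_iso J H"
  then obtain f where f: "bij_betw f (verts J) (verts H)"
    "\<forall>x\<in>verts J. \<forall>y\<in>verts J. {x, y} \<in> edges J \<longleftrightarrow> {f x, f y} \<in> edges H"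
    unfolding graph_iso_def by blast
  have "inj_on f (Dom J)"
    using f(1) unfolding bij_betw_def by (blast intro: inj_on_subset[OF _ Dom_subset_verts])
  then show ?thesis using card_image image_Dom_iso[OF f] unfolding dom_num_def by fastforce
qed

lemma Dom_swap_bijection:
  assumes w: "wf_graph H" and D1: "D1 \<subseteq> Dom H" and D2: "D2 \<subseteq> Dom H" and c: "card D1 = card D2"
  obtains h where "bij_betw h (verts H - D1) (verts H - D2)"
    "\<And>x. x \<notin> Dom H \<Longrightarrow> h x = x" "\<And>x. x \<in> Dom H - D1 \<Longrightarrow> h x \<in> Dom H"
proof -
  have fin: "finite (Dom H)" using finite_Dom[OF w] .
  have "card (Dom H - D1) = card (Dom H - D2)"
    using c D1 D2 fin by (simp add: card_Diff_subset finite_subset)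
  then obtain g where g: "bij_betw g (Dom H - D1) (Dom H - D2)"
    using finite_same_card_bij fin by blast
  define h where "h x = (if x \<in> Dom H then g x else x)" for x
  have "bij_betw h (verts H - Dom H) (verts H - Dom H)"
    by (rule bij_betw_cong[THEN iffD2, of _ _ id]) (auto simp: h_def)
  moreover have "bij_betw h (Dom H - D1) (Dom H - D2)"
    using g by (rule bij_betw_cong[THEN iffD2, rotated]) (simp add: h_def)
  ultimately have "bij_betw h ((verts H - Dom H) \<union> (Dom H - D1)) ((verts H - Dom H) \<union> (Dom H - D2))"
    by (rule bij_betw_combine) blast
  moreover have "(verts H - Dom H) \<union> (Dom H - D) = verts H - D" if "D \<subseteq> Dom H" for D
    using that Dom_subset_verts[of H] by blast
  ultimately have "bij_betw h (verts H - D1) (verts H - D2)" using D1 D2 by simp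
  moreover have "h x \<in> Dom H" if "x \<in> Dom H - D1" for x
    using that bij_betwE[OF g] by (auto simp: h_def)
  ultimately show ?thesis using that by (simp add: h_def)
qed

text \<open>Dominating vertices are interchangeable: a bijection that moves only dominating vertices
  preserves adjacency, since every pair containing a dominating vertex is an edge.\<close>

lemma graph_iso_delete_Dom:
  assumes w: "wf_graph H" and D1: "D1 \<subseteq> Dom H" and D2: "D2 \<subseteq> Dom H" and c: "card D1 = card D2"
  shows "graph_iso (induced H (verts H - D1)) (induced H (verts H - D2))"
proof -
  obtain h where h: "bij_betw h (verts H - D1) (verts H - D2)"
    and h_id: "\<And>x. x \<notin> Dom H \<Longrightarrow> h x = x" and Dom: "\<And>x. x \<in> Dom H - D1 \<Longrightarrow> h x \<in> Dom H"
    using Dom_swap_bijection[OF assms] by blast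
  have h_Dom: "h x \<in> Dom H \<longleftrightarrow> x \<in> Dom H" if "x \<in> verts H - D1" for x
    using that h_id Dom by (cases "x \<in> Dom H") auto
  have "{x, y} \<in> edges H \<longleftrightarrow> {h x, h y} \<in> edges H"
    if xy: "x \<in> verts H - D1" "y \<in> verts H - D1" for x y
  proof -
    have hxy: "h x \<in> verts H" "h y \<in> verts H" "h x = h y \<longleftrightarrow> x = y"
      using h xy unfolding bij_betw_def inj_on_def by auto
    consider "x = y" | "x \<noteq> y" "x \<in> Dom H \<or> y \<in> Dom H" | "x \<notin> Dom H" "y \<notin> Dom H"
      by blast
    then show ?thesis
    proof cases
      case 1
      then show ?thesis using wf_graph_no_loop[OF w] by simp
    next
      case 2
      then have "h x \<in> Dom H \<or> h y \<in> Dom H" using h_Dom xy by blast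
      then show ?thesis using edge_if_Dom[of x H y] edge_if_Dom[of "h x" H "h y"] 2 xy hxy by simp
    next
      case 3
      then show ?thesis by (simp add: h_id)
    qed
  qed
  moreover have "h x \<in> verts H - D2" if "x \<in> verts H - D1" for x
    using bij_betwE[OF h] that by blast
  ultimately show ?thesis using h unfolding graph_iso_def by (intro exI[of _ h]) simp
qed

lemma graph_iso_del_dom:
  assumes "wf_graph H" "D \<subseteq> Dom H" "card D = u"
  shows "graph_iso (induced H (verts H - D)) (del_dom H u)"
proof -
  define D' where "D' = (SOME D. D \<subseteq> Dom H \<and> card D = u)"
  have "D' \<subseteq> Dom H \<and> card D' = u"
    unfolding D'_def using assms(2,3) by (intro someI[of "\<lambda>D. D \<subseteq> Dom H \<and> card D = u"]) simp
  moreover have "del_dom H u = induced H (verts H - D')" unfolding del_dom_def D'_def by simp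
  ultimately show ?thesis using graph_iso_delete_Dom[OF assms(1,2), of D'] assms(3) by simp
qed

section \<open>Complete graphs, complete split graphs and the Turan bound\<close>

lemma verts_complete_graph [simp]: "verts (complete_graph n) = {0..<n}"
  by (simp add: complete_graph_def verts_def)

lemma edges_complete_graph:
  "e \<in> edges (complete_graph n) \<longleftrightarrow> (\<exists>i j. e = {i, j} \<and> i < n \<and> j < n \<and> i \<noteq> j)"
  by (simp add: complete_graph_def edges_def)

lemma verts_complete_split [simp]: "verts (complete_split u m) = {0..<u + m}"
  by (simp add: complete_split_def verts_def)

lemma edges_complete_split:
  "e \<in> edges (complete_split u m) \<longleftrightarrow>
     (\<exists>i j. e = {i, j} \<and> i < u + m \<and> j < u + m \<and> i \<noteq> j \<and> (i < u \<or> j < u))"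
  by (simp add: complete_split_def edges_def)

lemma verts_turan [simp]: "verts (turan r n) = {0..<n}"
  by (simp add: turan_def verts_def)

lemma edges_turan:
  "e \<in> edges (turan r n) \<longleftrightarrow> (\<exists>i j. e = {i, j} \<and> i < n \<and> j < n \<and> i mod r \<noteq> j mod r)"
  by (simp add: turan_def edges_def)

lemma wf_complete_graph: "wf_graph (complete_graph n)"
  unfolding wf_graph_def complete_graph_def verts_def edges_def by auto

lemma wf_complete_split: "wf_graph (complete_split u m)"
  unfolding wf_graph_def complete_split_def verts_def edges_def by auto

lemma wf_turan: "wf_graph (turan r n)"
  unfolding wf_graph_def turan_def verts_def edges_def by (auto simp: card_2_iff)

lemma finite_if_subset_verts: "wf_graph G \<Longrightarrow> S \<subseteq> verts G \<Longrightarrow> finite S"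
  unfolding wf_graph_def using finite_subset by blast

lemma is_clique_induced:
  "S \<subseteq> verts G \<Longrightarrow> is_clique (induced G S) K \<Longrightarrow> is_clique G K \<and> K \<subseteq> S"
  unfolding is_clique_def by auto

lemma copies_complete_graph_if_clique:
  assumes "wf_graph G" "is_clique G K"
  shows "copies (complete_graph (card K)) G \<noteq> {}"
proof -
  have "finite K" using assms finite_if_subset_verts unfolding is_clique_def by blast
  then obtain \<phi> where \<phi>: "bij_betw \<phi> {0..<card K} K" using ex_bij_betw_nat_finite by blast
  have "{\<phi> i, \<phi> j} \<in> edges G" if "i < card K" "j < card K" "i \<noteq> j" for i j
  proof -
    have "\<phi> i \<noteq> \<phi> j" using that bij_betw_imp_inj_on[OF \<phi>] unfolding inj_on_def by auto
    moreover have "\<phi> i \<in> K" "\<phi> j \<in> K" using that bij_betwE[OF \<phi>] by auto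
    ultimately show ?thesis using assms(2) unfolding is_clique_def by blast
  qed
  then have "graph_embedding \<phi> (complete_graph (card K)) G"
    using \<phi> assms(2) unfolding graph_embedding_def bij_betw_def is_clique_def
    by (auto simp: edges_complete_graph doubleton_eq_iff)
  then show ?thesis by (rule copies_nonempty_if_embeds[OF wf_complete_graph])
qed

lemma clique_if_copy_complete_graph:
  assumes "J \<in> copies (complete_graph m) G"
  shows "is_clique G (verts J)" "card (verts J) = m"
proof -
  have s: "verts J \<subseteq> verts G" "edges J \<subseteq> edges G" and i: "graph_iso J (complete_graph m)"
    using assms unfolding copies_def subgraph_def by auto
  obtain f where f: "bij_betw f (verts J) {0..<m}"
    "\<forall>x\<in>verts J. \<forall>y\<in>verts J. {x, y} \<in> edges J \<longleftrightarrow> {f x, f y} \<in> edges (complete_graph m)"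
    using i unfolding graph_iso_def by auto
  show "card (verts J) = m" using bij_betw_same_card[OF f(1)] by simp
  have "{x, y} \<in> edges J" if "x \<in> verts J" "y \<in> verts J" "x \<noteq> y" for x y
  proof -
    have "f x \<noteq> f y" "f x < m" "f y < m"
      using that f(1) unfolding bij_betw_def inj_on_def by auto
    then show ?thesis using f(2) that by (auto simp: edges_complete_graph)
  qed
  then show "is_clique G (verts J)" using s unfolding is_clique_def by blast
qed

lemma card_copies_turan_mono:
  assumes "n \<le> N" shows "card (copies F (turan r n)) \<le> card (copies F (turan r N))"
proof (rule card_copies_le_embedding[OF wf_turan])
  have "{x, y} \<in> edges (turan r N)" if "{x, y} \<in> edges (turan r n)" for x y
  proof -
    have "\<exists>i j. {x, y} = {i, j} \<and> i < n \<and> j < n \<and> i mod r \<noteq> j mod r"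
      using that by (simp only: edges_turan)
    then obtain i j where "{x, y} = {i, j}" "i < n" "j < n" "i mod r \<noteq> j mod r" by blast
    then show ?thesis unfolding edges_turan using assms by (intro exI[of _ i] exI[of _ j]) simp
  qed
  then show "graph_embedding id (turan r n) (turan r N)"
    using assms by (auto simp: graph_embedding_def)
qed

lemma graph_iso_nat_relabelling:
  assumes "wf_graph G"
  obtains G' :: "nat graph" where "wf_graph G'" "verts G' = {0..<card (verts G)}" "graph_iso G G'"
proof -
  obtain \<phi> where \<phi>: "bij_betw \<phi> (verts G) {0..<card (verts G)}"
    using ex_bij_betw_finite_nat[of "verts G"] assms unfolding wf_graph_def by auto
  then have inj: "inj_on \<phi> (verts G)" and "\<phi> ` verts G = {0..<card (verts G)}"
    by (simp_all add: bij_betw_def)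
  then show ?thesis
    using that wf_graph_graph_image[OF assms inj] graph_iso_graph_image[OF assms inj] by simp
qed

lemma card_copies_le_turan:
  assumes F: "omega0_prop F r0" "r0 \<le> r"
    and G: "wf_graph G" "card (verts G) \<le> \<Delta>" "copies (complete_graph (r + 1)) G = {}"
  shows "card (copies F G) \<le> num_copies F (turan r \<Delta>)"
proof -
  define n where "n = card (verts G)"
  obtain G' :: "nat graph" where G': "wf_graph G'" "verts G' = {0..<n}" "graph_iso G G'"
    by (rule graph_iso_nat_relabelling[OF G(1), folded n_def])
  obtain \<phi> where "graph_embedding \<phi> G G'" using graph_iso_imp_embedding[OF G'(3)] .
  then have "card (copies F G) \<le> card (copies F G')" by (rule card_copies_le_embedding[OF G'(1)])
  also have "\<dots> \<le> card (copies F (turan r n))"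
  proof (cases "n = 0")
    case True
    then have "graph_embedding id G' (turan r n)" using G'(2) unfolding graph_embedding_def by simp
    then show ?thesis by (rule card_copies_le_embedding[OF wf_turan])
  next
    case False
    obtain \<psi> where "graph_embedding \<psi> G' G" using graph_iso_imp_embedding[OF graph_iso_sym[OF G'(3)]] .
    then have "copies (complete_graph (r + 1)) G' = {}" using copies_nonempty_embedding G(3) by metis
    then have "free {complete_graph (r + 1)} G'" by (simp add: free_def)
    moreover have "1 \<le> n" "card (verts G') = n" using False G'(2) by simp_all
    ultimately have "num_copies F G' \<le> num_copies F (turan r n)"
      using F(1)[unfolded omega0_prop_def, THEN conjunct2, rule_format, OF F(2) \<open>1 \<le> n\<close>, of G'] G'(1)
      by simp
    then show ?thesis unfolding num_copies_def .
  qed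
  also have "\<dots> \<le> num_copies F (turan r \<Delta>)"
    unfolding num_copies_def using G(2) n_def by (intro card_copies_turan_mono) simp
  finally show ?thesis .
qed

section \<open>Common neighbourhoods\<close>

definition common_nbhd :: "'a graph \<Rightarrow> 'a set \<Rightarrow> 'a set" where
  "common_nbhd G c = {v \<in> verts G - c. \<forall>x\<in>c. {x, v} \<in> edges G}"

lemma common_nbhd_subset_verts: "common_nbhd G c \<subseteq> verts G"
  by (auto simp: common_nbhd_def)

lemma is_clique_Un_common_nbhd:
  assumes c: "is_clique G c" and K: "is_clique G K" "K \<subseteq> common_nbhd G c"
  shows "is_clique G (c \<union> K)"
  unfolding is_clique_def
proof (intro conjI ballI impI)
  show "c \<union> K \<subseteq> verts G" using c K unfolding is_clique_def by blast
next
  fix x y assume xy: "x \<in> c \<union> K" "y \<in> c \<union> K" "x \<noteq> y"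
  consider "x \<in> c" "y \<in> c" | "x \<in> K" "y \<in> K" | "x \<in> c" "y \<in> K" | "x \<in> K" "y \<in> c"
    using xy by blast
  then show "{x, y} \<in> edges G"
    using c K xy(3) unfolding is_clique_def common_nbhd_def by cases (auto simp: insert_commute)
qed

lemma copies_complete_split_if_common_nbhd:
  assumes G: "wf_graph G" and c: "is_clique G c" "card c = u"
    and S: "S \<subseteq> common_nbhd G c" "card S = m"
  shows "copies (complete_split u m) G \<noteq> {}"
proof -
  have "finite c" using finite_if_subset_verts[OF G] c(1) unfolding is_clique_def by simp
  then obtain g1 where g1: "bij_betw g1 {0..<u} c" using ex_bij_betw_nat_finite c(2) by blast
  have "finite S" using finite_subset[OF S(1) finite_if_subset_verts[OF G common_nbhd_subset_verts]] .
  then obtain g2 where g2: "bij_betw g2 {0..<m} S" using ex_bij_betw_nat_finite S(2) by blast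
  define \<phi> where "\<phi> i = (if i < u then g1 i else g2 (i - u))" for i
  have "bij_betw \<phi> {0..<u} c"
    using g1 by (rule bij_betw_cong[THEN iffD1, rotated]) (simp add: \<phi>_def)
  moreover have "bij_betw (\<lambda>i. i - u) {u..<u + m} {0..<m}"
    by (auto simp: bij_betw_def inj_on_def image_minus_const_atLeastLessThan_nat)
  then have "bij_betw (g2 \<circ> (\<lambda>i. i - u)) {u..<u + m} S" using g2 by (rule bij_betw_trans)
  then have \<phi>S: "bij_betw \<phi> {u..<u + m} S"
    by (rule bij_betw_cong[THEN iffD1, rotated]) (simp add: \<phi>_def)
  moreover have "c \<inter> S = {}" using S(1) unfolding common_nbhd_def by blast
  ultimately have \<phi>: "bij_betw \<phi> ({0..<u} \<union> {u..<u + m}) (c \<union> S)"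
    by (rule bij_betw_combine)
  have edge: "{\<phi> i, \<phi> j} \<in> edges G" if "i < u" "j < u + m" "i \<noteq> j" for i j
  proof (cases "j < u")
    case True
    then have "\<phi> i \<noteq> \<phi> j" using inj_onD[OF bij_betw_imp_inj_on[OF \<phi>], of i j] that by auto
    moreover have "\<phi> i \<in> c" "\<phi> j \<in> c" using that True bij_betwE[OF g1] by (auto simp: \<phi>_def)
    ultimately show ?thesis using c(1) unfolding is_clique_def by blast
  next
    case False
    then have "\<phi> j \<in> common_nbhd G c" using that bij_betwE[OF \<phi>S] S(1) by auto
    moreover have "\<phi> i \<in> c" using that bij_betwE[OF g1] by (auto simp: \<phi>_def)
    ultimately show ?thesis unfolding common_nbhd_def by blast
  qed
  have "{\<phi> x, \<phi> y} \<in> edges G" if "{x, y} \<in> edges (complete_split u m)" for x y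
  proof -
    have "\<exists>i j. {x, y} = {i, j} \<and> i < u + m \<and> j < u + m \<and> i \<noteq> j \<and> (i < u \<or> j < u)"
      using that by (simp only: edges_complete_split)
    then obtain i j where ij: "{x, y} = {i, j}" "i < u + m" "j < u + m" "i \<noteq> j" "i < u \<or> j < u"
      by blast
    have "{\<phi> x, \<phi> y} = {\<phi> i, \<phi> j}" using arg_cong[OF ij(1), of "(`) \<phi>"] by simp
    also have "\<dots> \<in> edges G"
    proof (cases "i < u")
      case True
      then show ?thesis using edge ij by simp
    next
      case False
      then have "{\<phi> j, \<phi> i} \<in> edges G" using edge ij by simp
      then show ?thesis by (simp add: insert_commute)
    qed
    finally show ?thesis .
  qed
  moreover have "{0..<u} \<union> {u..<u + m} = {0..<u + m}" by auto
  moreover have "c \<union> S \<subseteq> verts G"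
    using c(1) S(1) common_nbhd_subset_verts[of G c] unfolding is_clique_def by blast
  ultimately have "graph_embedding \<phi> (complete_split u m) G"
    using \<phi> unfolding graph_embedding_def bij_betw_def by (simp only: verts_complete_split) blast
  then show ?thesis by (rule copies_nonempty_if_embeds[OF wf_complete_split])
qed

lemma card_common_nbhd_le:
  assumes "wf_graph G" "is_clique G c" "card c = u"
    and "copies (complete_split u (\<Delta> + 1)) G = {}"
  shows "card (common_nbhd G c) \<le> \<Delta>"
proof (rule ccontr)
  assume "\<not> card (common_nbhd G c) \<le> \<Delta>"
  then have "\<Delta> + 1 \<le> card (common_nbhd G c)" by simp
  then obtain S where "S \<subseteq> common_nbhd G c" "card S = \<Delta> + 1"
    by (rule obtain_subset_with_card_n)
  then show False using copies_complete_split_if_common_nbhd[OF assms(1-3)] assms(4) by simp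
qed

lemma copies_complete_graph_common_nbhd_empty:
  assumes G: "wf_graph G" and c: "is_clique G c" "card c = u" "u \<le> \<omega>"
    and free: "copies (complete_graph (\<omega> + 1)) G = {}"
  shows "copies (complete_graph (\<omega> - u + 1)) (induced G (common_nbhd G c)) = {}"
proof (rule equals0I)
  fix J assume "J \<in> copies (complete_graph (\<omega> - u + 1)) (induced G (common_nbhd G c))"
  then have "is_clique (induced G (common_nbhd G c)) (verts J)" "card (verts J) = \<omega> - u + 1"
    by (rule clique_if_copy_complete_graph)+
  then have K: "is_clique G (verts J)" "verts J \<subseteq> common_nbhd G c" "card (verts J) = \<omega> - u + 1"
    using is_clique_induced[OF common_nbhd_subset_verts, of G c "verts J"] by simp_all
  have "is_clique G (c \<union> verts J)" using is_clique_Un_common_nbhd[OF c(1) K(1,2)] .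
  moreover have "finite (c \<union> verts J)"
    using finite_if_subset_verts[OF G] calculation unfolding is_clique_def by simp
  moreover have "c \<inter> verts J = {}" using K(2) unfolding common_nbhd_def by blast
  ultimately have "card (c \<union> verts J) = \<omega> + 1" using K(3) c(2,3) by (simp add: card_Un_disjoint)
  then show False
    using copies_complete_graph_if_clique[OF G \<open>is_clique G (c \<union> verts J)\<close>] free by simp
qed

lemma verts_diff_subset_common_nbhd:
  assumes "subgraph J G" "c \<subseteq> Dom J"
  shows "verts J - c \<subseteq> common_nbhd G c"
proof
  fix v assume v: "v \<in> verts J - c"
  have "{x, v} \<in> edges J" if "x \<in> c" for x
    using edge_if_Dom[of x J v] that v assms(2) Dom_subset_verts[of J] by blast
  then show "v \<in> common_nbhd G c"
    using v assms(1) unfolding common_nbhd_def subgraph_def by blast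
qed

lemma edges_subset_if_Dom:
  assumes "wf_graph J1" "verts J1 = verts J2" "c \<subseteq> Dom J2"
    and "{e \<in> edges J1. e \<subseteq> verts J1 - c} \<subseteq> edges J2"
  shows "edges J1 \<subseteq> edges J2"
proof
  fix e assume e: "e \<in> edges J1"
  then obtain x y where xy: "x \<in> verts J1" "y \<in> verts J1" "x \<noteq> y" "e = {x, y}"
    using wf_graph_edgeE[OF assms(1)] by metis
  show "e \<in> edges J2"
  proof (cases "x \<in> c \<or> y \<in> c")
    case True
    then show ?thesis using edge_if_Dom[of x J2 y] xy assms(2,3) by auto
  next
    case False
    then show ?thesis using assms(4) e xy by auto
  qed
qed

lemma eq_if_induced_diff_Dom_eq:
  assumes "wf_graph J1" "wf_graph J2" "c \<subseteq> Dom J1" "c \<subseteq> Dom J2"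
    and eq: "induced J1 (verts J1 - c) = induced J2 (verts J2 - c)"
  shows "J1 = J2"
proof (rule graph_eqI)
  have "c \<subseteq> verts J1" "c \<subseteq> verts J2"
    using subset_trans[OF assms(3) Dom_subset_verts] subset_trans[OF assms(4) Dom_subset_verts] .
  moreover have "verts J1 - c = verts J2 - c" using arg_cong[OF eq, of verts] by simp
  ultimately show v: "verts J1 = verts J2" by (metis Diff_partition)
  have E: "{e \<in> edges J1. e \<subseteq> verts J1 - c} = {e \<in> edges J2. e \<subseteq> verts J2 - c}"
    using arg_cong[OF eq, of edges] by simp
  have "edges J1 \<subseteq> edges J2"
    by (rule edges_subset_if_Dom[OF assms(1) v assms(4)]) (unfold E, blast)
  moreover have "edges J2 \<subseteq> edges J1"
    by (rule edges_subset_if_Dom[OF assms(2) v[symmetric] assms(3)]) (unfold E[symmetric], blast)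
  ultimately show "edges J1 = edges J2" by (rule subset_antisym)
qed

lemma induced_diff_Dom_in_copies_del_dom:
  assumes H: "wf_graph H" and J: "J \<in> copies H G" and c: "c \<subseteq> Dom J" "card c = u"
  shows "induced J (verts J - c) \<in> copies (del_dom H u) (induced G (common_nbhd G c))"
proof -
  have s: "subgraph J G" and wJ: "wf_graph J" and i: "graph_iso J H"
    using J unfolding copies_def subgraph_def by auto
  have cJ: "c \<subseteq> verts J" using subset_trans[OF c(1) Dom_subset_verts] .
  have "subgraph (induced J (verts J - c)) (induced G (common_nbhd G c))"
    using verts_diff_subset_common_nbhd[OF s c(1)] wf_graph_induced[OF wJ Diff_subset] s
    unfolding subgraph_def by auto
  moreover have "graph_iso (induced J (verts J - c)) (del_dom H u)"
  proof -
    obtain f where f: "bij_betw f (verts J) (verts H)"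
      "\<forall>x\<in>verts J. \<forall>y\<in>verts J. {x, y} \<in> edges J \<longleftrightarrow> {f x, f y} \<in> edges H"
      using i unfolding graph_iso_def by blast
    have "f ` (verts J - c) = f ` verts J - f ` c"
      using inj_on_image_set_diff[OF bij_betw_imp_inj_on[OF f(1)] Diff_subset cJ] .
    also have "\<dots> = verts H - f ` c" using f(1) unfolding bij_betw_def by simp
    finally have "f ` (verts J - c) = verts H - f ` c" .
    then have "graph_iso (induced J (verts J - c)) (induced H (verts H - f ` c))"
      using graph_iso_induced[OF f, of "verts J - c"] by simp
    moreover have "f ` c \<subseteq> Dom H" using c(1) image_Dom_iso[OF f] by blast
    moreover have "card (f ` c) = u"
      using c(2) card_image[OF inj_on_subset[OF bij_betw_imp_inj_on[OF f(1)] cJ]] by simp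
    ultimately show ?thesis using graph_iso_trans graph_iso_del_dom[OF H] by blast
  qed
  ultimately show ?thesis unfolding copies_def by simp
qed

lemma card_copies_Dom_le:
  assumes "wf_graph G" "wf_graph H" "card c = u"
  shows "card {J \<in> copies H G. c \<subseteq> Dom J} \<le> card (copies (del_dom H u) (induced G (common_nbhd G c)))"
proof (rule card_inj_on_le)
  show "inj_on (\<lambda>J. induced J (verts J - c)) {J \<in> copies H G. c \<subseteq> Dom J}"
  proof (rule inj_onI)
    fix J1 J2 assume "J1 \<in> {J \<in> copies H G. c \<subseteq> Dom J}" "J2 \<in> {J \<in> copies H G. c \<subseteq> Dom J}"
      and "induced J1 (verts J1 - c) = induced J2 (verts J2 - c)"
    then show "J1 = J2"
      by (intro eq_if_induced_diff_Dom_eq[of J1 J2 c]) (simp_all add: copies_def subgraph_def)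
  qed
  show "(\<lambda>J. induced J (verts J - c)) ` {J \<in> copies H G. c \<subseteq> Dom J}
      \<subseteq> copies (del_dom H u) (induced G (common_nbhd G c))"
    using induced_diff_Dom_in_copies_del_dom[OF assms(2) _ _ assms(3)] by blast
  show "finite (copies (del_dom H u) (induced G (common_nbhd G c)))"
    by (rule finite_copies[OF wf_graph_induced[OF assms(1) common_nbhd_subset_verts]])
qed

section \<open>Double counting\<close>

lemma double_counting_le:
  fixes R :: "'a \<Rightarrow> 'b \<Rightarrow> bool"
  assumes "finite A" "finite C"
    and "\<And>a. a \<in> A \<Longrightarrow> card {c \<in> C. R a c} = k"
    and "\<And>c. c \<in> C \<Longrightarrow> card {a \<in> A. R a c} \<le> T"
  shows "card A * k \<le> T * card C"
proof -
  have "card A * k = (\<Sum>a\<in>A. card {c \<in> C. R a c})" using assms(3) by simp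
  also have "\<dots> = (\<Sum>a\<in>A. \<Sum>c\<in>C. if R a c then 1 else 0)"
    by (intro sum.cong refl) (simp only: card_eq_sum sum.inter_filter[OF assms(2)])
  also have "\<dots> = (\<Sum>c\<in>C. \<Sum>a\<in>A. if R a c then 1 else 0)" by (rule sum.swap)
  also have "\<dots> = (\<Sum>c\<in>C. card {a \<in> A. R a c})"
    by (intro sum.cong refl) (simp only: card_eq_sum sum.inter_filter[OF assms(1)])
  also have "\<dots> \<le> (\<Sum>c\<in>C. T)" using assms(4) by (rule sum_mono)
  finally show ?thesis by (simp add: mult.commute)
qed

lemma is_clique_if_subset_Dom: "subgraph J G \<Longrightarrow> B \<subseteq> Dom J \<Longrightarrow> is_clique G B"
  unfolding is_clique_def subgraph_def
  using edge_if_Dom[of _ J] Dom_subset_verts[of J] by blast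

lemma card_cliques_subset_Dom:
  assumes "J \<in> copies H G"
  shows "card {c. is_clique G c \<and> card c = u \<and> c \<subseteq> Dom J} = dom_num H choose u"
proof -
  have "subgraph J G" "graph_iso J H" using assms unfolding copies_def by auto
  then have "{c. is_clique G c \<and> card c = u \<and> c \<subseteq> Dom J} = {B. B \<subseteq> Dom J \<and> card B = u}"
    using is_clique_if_subset_Dom by blast
  moreover have "finite (Dom J)" using \<open>subgraph J G\<close> finite_Dom unfolding subgraph_def by blast
  ultimately show ?thesis
    using n_subsets[of "Dom J" u] dom_num_iso[OF \<open>graph_iso J H\<close>] unfolding dom_num_def by simp
qed

lemma finite_cliques: "wf_graph G \<Longrightarrow> finite {c. is_clique G c \<and> card c = u}"
  by (rule finite_subset[of _ "Pow (verts G)"]) (auto simp: is_clique_def wf_graph_def)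

lemma card_copies_Dom_superset_le_turan:
  assumes G: "wf_graph G" and H: "wf_graph H"
    and F: "omega0_prop (del_dom H u) r0" "r0 + u \<le> \<omega>"
    and free: "free {complete_split u (\<Delta> + 1), complete_graph (\<omega> + 1)} G"
    and c: "is_clique G c" "card c = u"
  shows "card {J \<in> copies H G. c \<subseteq> Dom J} \<le> num_copies (del_dom H u) (turan (\<omega> - u) \<Delta>)"
proof -
  have "copies (complete_split u (\<Delta> + 1)) G = {}" "copies (complete_graph (\<omega> + 1)) G = {}"
    using free unfolding free_def by simp_all
  then have "card (common_nbhd G c) \<le> \<Delta>"
    and "copies (complete_graph (\<omega> - u + 1)) (induced G (common_nbhd G c)) = {}"
    using card_common_nbhd_le[OF G c] copies_complete_graph_common_nbhd_empty[OF G c] F(2) by simp_all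
  then have "card (copies (del_dom H u) (induced G (common_nbhd G c)))
      \<le> num_copies (del_dom H u) (turan (\<omega> - u) \<Delta>)"
    using card_copies_le_turan[OF F(1) _ wf_graph_induced[OF G common_nbhd_subset_verts]] F(2) by simp
  then show ?thesis using card_copies_Dom_le[OF G H c(2)] by linarith
qed

theorem mainTheorem18:
  fixes H :: "'b graph" and G :: "'a graph" and u \<Delta> \<omega> :: nat
  assumes "wf_graph H" and "wf_graph G"
    and "u \<ge> 1"
    and "dom_num H \<ge> u"
    and morrison: "\<exists>r0. omega0_prop (del_dom H u) r0"
    and "\<Delta> \<ge> \<omega>"
    and "\<omega> \<ge> omega0 (del_dom H u) + u"
    and "free {complete_split u (\<Delta> + 1), complete_graph (\<omega> + 1)} G"
    and "\<forall>c. is_clique G c \<and> card c = u \<and> (\<exists>J\<in>copies H G. c \<subseteq> Dom J)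
            \<longrightarrow> clique_omega G c \<ge> omega0 (del_dom H u) + u"
  shows "real (num_copies H G)
           \<le> real (num_copies (del_dom H u) (turan (\<omega> - u) \<Delta>)) * real (num_cliques u G)
             / real (dom_num H choose u)"
proof -
  define T where "T = num_copies (del_dom H u) (turan (\<omega> - u) \<Delta>)"
  define C where "C = {c. is_clique G c \<and> card c = u}"
  have "omega0_prop (del_dom H u) (omega0 (del_dom H u))"
    unfolding omega0_def by (rule LeastI_ex[OF morrison])
  then have per_clique: "card {J \<in> copies H G. c \<subseteq> Dom J} \<le> T" if "c \<in> C" for c
    using card_copies_Dom_superset_le_turan assms(1,2,7,8) that unfolding T_def C_def by blast
  have per_copy: "card {c \<in> C. c \<subseteq> Dom J} = dom_num H choose u" if "J \<in> copies H G" for J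
    using card_cliques_subset_Dom[OF that] unfolding C_def by simp
  have "finite C" unfolding C_def by (rule finite_cliques[OF assms(2)])
  from double_counting_le[OF finite_copies[OF assms(2)] this per_copy per_clique]
  have "num_copies H G * (dom_num H choose u) \<le> T * num_cliques u G"
    unfolding num_copies_def num_cliques_def C_def .
  moreover have "0 < dom_num H choose u" using assms(4) by simp
  ultimately show ?thesis unfolding T_def by (simp add: pos_le_divide_eq flip: of_nat_mult)
qed

end
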